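(* Let $\mathbf{y}\in\mathbb{R}_\infty$. Then: (i) the Moore–Penrose pseudoinverse $\mathbf{y}^+$ of $\mathbf{y}$ (as a bounded operator on $\ell_{2+}$) belongs to $\mathbb{R}_\infty$; (ii) $\mathbf{y}$ has a unique positive semi-definite square root $\sqrt{\mathbf{y}}$ if and only if $\mathbf{y}\succeq\mathbf{0}$, and furthermore $\sqrt{\mathbf{y}}\in\mathbb{R}_\infty$.
   Context: $\ell_{2+}$ is the Hilbert space of square-summable real sequences $(y[0],y[1],\ldots)$ with inner product $\langle x,y\rangle=\sum_k x[k]y[k]$. The forward shift is $\mathfrak{q}:(y[0],y[1],\ldots)\mapsto(y[1],y[2],\ldots)$, with adjoint $\mathfrak{q}^*:(y[0],y[1],\ldots)\mapsto(0,y[0],y[1],\ldots)$. $\mathbb{R}_\infty=\{\sum_{k=0}^N\alpha_k(\mathfrak{q}^* )^k\mathfrak{q}^k : N\in\mathbb{N},\ \alpha_k\in\mathbb{R}\}$. An operator $\mathbf{M}$ is positive semi-definite, $\mathbf{M}\succeq\mathbf{0}$, if $\mathbf{M}=\mathbf{M}^*$ and $\langle x,\mathbf{M}x\rangle\ge0$ for all $x\in\ell_{2+}$. *)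

theory Defs
  imports "HOL-Analysis.Analysis"
begin

typedef l2 = "{x :: nat \<Rightarrow> real. summable (\<lambda>k. (x k)\<^sup>2)}"
  by (rule exI[of _ "\<lambda>_. 0"]) simp

definition l2_inner :: "l2 \<Rightarrow> l2 \<Rightarrow> real" where
  "l2_inner x y = (\<Sum>k. Rep_l2 x k * Rep_l2 y k)"

definition l2_norm :: "l2 \<Rightarrow> real" where
  "l2_norm x = sqrt (l2_inner x x)"

definition l2_lin :: "real \<Rightarrow> l2 \<Rightarrow> real \<Rightarrow> l2 \<Rightarrow> l2" where
  "l2_lin a x b y = Abs_l2 (\<lambda>k. a * Rep_l2 x k + b * Rep_l2 y k)"

definition fwd_shift :: "l2 \<Rightarrow> l2" where
  "fwd_shift y = Abs_l2 (\<lambda>k. Rep_l2 y (Suc k))"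

definition bwd_shift :: "l2 \<Rightarrow> l2" where
  "bwd_shift y = Abs_l2 (\<lambda>k. if k = 0 then 0 else Rep_l2 y (k - 1))"

definition bounded_op :: "(l2 \<Rightarrow> l2) \<Rightarrow> bool" where
  "bounded_op T \<longleftrightarrow>
     (\<forall>a x b y. T (l2_lin a x b y) = l2_lin a (T x) b (T y)) \<and>
     (\<exists>C. \<forall>x. l2_norm (T x) \<le> C * l2_norm x)"

definition is_adjoint :: "(l2 \<Rightarrow> l2) \<Rightarrow> (l2 \<Rightarrow> l2) \<Rightarrow> bool" where
  "is_adjoint T S \<longleftrightarrow> (\<forall>x y. l2_inner x (T y) = l2_inner (S x) y)"

definition psd :: "(l2 \<Rightarrow> l2) \<Rightarrow> bool" where
  "psd M \<longleftrightarrow> bounded_op M \<and> is_adjoint M M \<and> (\<forall>x. 0 \<le> l2_inner x (M x))"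

definition R_inf :: "(l2 \<Rightarrow> l2) set" where
  "R_inf = {T. \<exists>(N::nat) (\<alpha>::nat \<Rightarrow> real).
      T = (\<lambda>y. Abs_l2 (\<lambda>n. \<Sum>k\<le>N. \<alpha> k * Rep_l2 ((bwd_shift ^^ k) ((fwd_shift ^^ k) y)) n))}"

definition is_mp_pinv :: "(l2 \<Rightarrow> l2) \<Rightarrow> (l2 \<Rightarrow> l2) \<Rightarrow> bool" where
  "is_mp_pinv A P \<longleftrightarrow> bounded_op P \<and>
     A \<circ> P \<circ> A = A \<and> P \<circ> A \<circ> P = P \<and>
     is_adjoint (A \<circ> P) (A \<circ> P) \<and> is_adjoint (P \<circ> A) (P \<circ> A)"

end

theory Submission
  imports Defs
begin

text \<open>Each \<open>(q*)^k q^k\<close> is the coordinate projection that zeroes the first \<open>k\<close> entries of a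
sequence, so \<open>R_inf\<close> consists exactly of the diagonal operators \<open>x \<mapsto> (d n * x n)\<close> with
\<open>d\<close> eventually constant. For such a \<open>d\<close>, the diagonal operator with entries \<open>inverse (d n)\<close>
(where \<open>inverse 0 = 0\<close>) satisfies the Penrose equations, which determine a pseudoinverse uniquely,
and the diagonal operator with entries \<open>sqrt (d n)\<close> is a positive square root precisely when
\<open>d \<ge> 0\<close>. It is the only one: if \<open>S\<close> is positive and \<open>S\<^sup>2 v = a v\<close> with \<open>a > 0\<close>, then
\<open>w = S v - sqrt a v\<close> satisfies \<open>S w = - sqrt a w\<close>, and positivity of \<open>S\<close> forces \<open>w = 0\<close>.\<close>

lemma Rep_l2_square_summable: "summable (\<lambda>k. (Rep_l2 x k)\<^sup>2)"
  using Rep_l2 by simp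

lemma Rep_Abs_l2: "summable (\<lambda>k. (f k)\<^sup>2) \<Longrightarrow> Rep_l2 (Abs_l2 f) = f"
  by (simp add: Abs_l2_inverse)

lemma l2_eqI: "(\<And>k. Rep_l2 u k = Rep_l2 v k) \<Longrightarrow> u = v"
  by (metis Rep_l2_inject ext)

lemma Rep_l2_lin: "Rep_l2 (l2_lin a x b y) k = a * Rep_l2 x k + b * Rep_l2 y k"
proof -
  let ?f = "\<lambda>k. a * Rep_l2 x k + b * Rep_l2 y k"
  have "summable (\<lambda>k. (?f k)\<^sup>2)"
  proof (rule summable_comparison_test'[of "\<lambda>k. 2 * a\<^sup>2 * (Rep_l2 x k)\<^sup>2 + 2 * b\<^sup>2 * (Rep_l2 y k)\<^sup>2"])
    show "summable (\<lambda>k. 2 * a\<^sup>2 * (Rep_l2 x k)\<^sup>2 + 2 * b\<^sup>2 * (Rep_l2 y k)\<^sup>2)"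
      by (intro summable_add summable_mult Rep_l2_square_summable)
  next
    fix k
    have "0 \<le> (a * Rep_l2 x k - b * Rep_l2 y k)\<^sup>2" by simp
    then have "(?f k)\<^sup>2 \<le> 2 * a\<^sup>2 * (Rep_l2 x k)\<^sup>2 + 2 * b\<^sup>2 * (Rep_l2 y k)\<^sup>2"
      by (simp add: power2_eq_square algebra_simps)
    then show "norm ((?f k)\<^sup>2) \<le> 2 * a\<^sup>2 * (Rep_l2 x k)\<^sup>2 + 2 * b\<^sup>2 * (Rep_l2 y k)\<^sup>2"
      by simp
  qed
  then show ?thesis
    unfolding l2_lin_def by (simp add: Rep_Abs_l2)
qed

lemma l2_inner_self: "l2_inner x x = (\<Sum>k. (Rep_l2 x k)\<^sup>2)"
  unfolding l2_inner_def by (simp add: power2_eq_square)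

lemma l2_inner_self_nonneg: "0 \<le> l2_inner x x"
  unfolding l2_inner_self by (simp add: suminf_nonneg Rep_l2_square_summable)

lemma l2_inner_self_eq_0D: "l2_inner x x = 0 \<Longrightarrow> Rep_l2 x k = 0"
  unfolding l2_inner_self
  using suminf_eq_zero_iff[OF Rep_l2_square_summable zero_le_power2] by simp

lemma inner_square_nonneg_if_self_adjoint:
  "is_adjoint S S \<Longrightarrow> 0 \<le> l2_inner x (S (S x))"
  unfolding is_adjoint_def by (metis l2_inner_self_nonneg)

definition unit_vec :: "nat \<Rightarrow> l2" where
  "unit_vec m = Abs_l2 (\<lambda>k. if k = m then 1 else 0)"

lemma Rep_unit_vec: "Rep_l2 (unit_vec m) k = (if k = m then 1 else 0)"
proof -
  have "(\<lambda>k. (if k = m then 1 else 0 :: real)\<^sup>2) = (\<lambda>k. if k = m then 1 else 0)"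
    by auto
  then have "summable (\<lambda>k. (if k = m then 1 else 0 :: real)\<^sup>2)"
    using summable_single[of m "\<lambda>_. 1 :: real"] by simp
  then show ?thesis
    unfolding unit_vec_def by (simp add: Rep_Abs_l2)
qed

lemma suminf_unit_vec_mult: "(\<Sum>k. Rep_l2 (unit_vec m) k * f k) = f m"
proof -
  have "(\<lambda>k. Rep_l2 (unit_vec m) k * f k) = (\<lambda>k. if k = m then f k else 0)"
    by (auto simp: Rep_unit_vec)
  then show ?thesis
    using sums_unique[OF sums_single[of m f]] by simp
qed

lemma l2_inner_unit_vec_left: "l2_inner (unit_vec m) x = Rep_l2 x m"
  unfolding l2_inner_def by (rule suminf_unit_vec_mult)

lemma l2_inner_unit_vec_right: "l2_inner x (unit_vec m) = Rep_l2 x m"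
  unfolding l2_inner_def using suminf_unit_vec_mult[of m "Rep_l2 x"] by (simp add: mult.commute)

lemma l2_eq_if_inner_eq: "(\<And>z. l2_inner u z = l2_inner v z) \<Longrightarrow> u = v"
  by (rule l2_eqI) (simp flip: l2_inner_unit_vec_right)

lemma Rep_fwd_shift: "Rep_l2 (fwd_shift y) k = Rep_l2 y (Suc k)"
proof -
  have "summable (\<lambda>k. (Rep_l2 y (Suc k))\<^sup>2)"
    using summable_Suc_iff[of "\<lambda>k. (Rep_l2 y k)\<^sup>2"] Rep_l2_square_summable by simp
  then show ?thesis
    unfolding fwd_shift_def by (simp add: Rep_Abs_l2)
qed

lemma Rep_bwd_shift: "Rep_l2 (bwd_shift y) k = (if k = 0 then 0 else Rep_l2 y (k - 1))"
proof -
  have "summable (\<lambda>k. (if k = 0 then 0 else Rep_l2 y (k - 1))\<^sup>2)"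
    by (rule summable_Suc_iff[THEN iffD1]) (simp add: Rep_l2_square_summable)
  then show ?thesis
    unfolding bwd_shift_def by (simp add: Rep_Abs_l2)
qed

lemma Rep_fwd_shift_pow: "Rep_l2 ((fwd_shift ^^ j) y) n = Rep_l2 y (n + j)"
  by (induction j arbitrary: n) (simp_all add: Rep_fwd_shift)

lemma Rep_bwd_shift_pow:
  "Rep_l2 ((bwd_shift ^^ j) y) n = (if j \<le> n then Rep_l2 y (n - j) else 0)"
  by (induction j arbitrary: n) (auto simp: Rep_bwd_shift Suc_diff_Suc)

lemma Rep_bwd_fwd_shift_pow:
  "Rep_l2 ((bwd_shift ^^ k) ((fwd_shift ^^ k) y)) n = (if k \<le> n then Rep_l2 y n else 0)"
  by (simp add: Rep_bwd_shift_pow Rep_fwd_shift_pow)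

subsection \<open>Diagonal operators\<close>

definition mult_op :: "(nat \<Rightarrow> real) \<Rightarrow> l2 \<Rightarrow> l2" where
  "mult_op c x = Abs_l2 (\<lambda>n. c n * Rep_l2 x n)"

lemma Bseq_real_sqrt: "Bseq d \<Longrightarrow> Bseq (\<lambda>n. sqrt (d n :: real))"
proof (elim BseqE)
  fix K assume K: "\<forall>n. norm (d n) \<le> K"
  show "Bseq (\<lambda>n. sqrt (d n))"
  proof (rule BseqI')
    fix n
    have "norm (sqrt (d n)) = sqrt \<bar>d n\<bar>" by (simp add: real_sqrt_abs')
    also have "\<dots> \<le> sqrt K" using K by (simp add: real_sqrt_le_mono)
    finally show "norm (sqrt (d n)) \<le> sqrt K" .
  qed
qed

lemma mult_op_square_bound:
  assumes "\<forall>n. norm (c n) \<le> K"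
  shows "(c n * Rep_l2 x n)\<^sup>2 \<le> K\<^sup>2 * (Rep_l2 x n)\<^sup>2"
proof -
  have "\<bar>c n * Rep_l2 x n\<bar>\<^sup>2 \<le> (K * \<bar>Rep_l2 x n\<bar>)\<^sup>2"
    using assms by (intro power_mono) (simp_all add: abs_mult mult_right_mono)
  then show ?thesis by (simp add: power_mult_distrib)
qed

lemma mult_op_square_summable:
  assumes "\<forall>n. norm (c n) \<le> K"
  shows "summable (\<lambda>n. (c n * Rep_l2 x n)\<^sup>2)"
  by (rule summable_comparison_test'[of "\<lambda>n. K\<^sup>2 * (Rep_l2 x n)\<^sup>2"])
    (simp_all add: summable_mult Rep_l2_square_summable mult_op_square_bound[OF assms])

lemma Rep_mult_op:
  assumes "Bseq c"
  shows "Rep_l2 (mult_op c x) n = c n * Rep_l2 x n"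
proof -
  obtain K where "\<forall>n. norm (c n) \<le> K" using assms by (elim BseqE)
  then show ?thesis
    unfolding mult_op_def by (simp add: Rep_Abs_l2 mult_op_square_summable)
qed

lemma mult_op_comp:
  "Bseq c \<Longrightarrow> Bseq d \<Longrightarrow> mult_op c \<circ> mult_op d = mult_op (\<lambda>n. c n * d n)"
  by (intro ext l2_eqI) (simp add: Rep_mult_op Bseq_mult)

lemma mult_op_self_adjoint: "Bseq c \<Longrightarrow> is_adjoint (mult_op c) (mult_op c)"
  unfolding is_adjoint_def l2_inner_def by (simp add: Rep_mult_op mult_ac)

lemma bounded_op_mult_op:
  assumes c: "Bseq c"
  shows "bounded_op (mult_op c)"
  unfolding bounded_op_def
proof (intro conjI allI)
  fix a x b y
  show "mult_op c (l2_lin a x b y) = l2_lin a (mult_op c x) b (mult_op c y)"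
    by (rule l2_eqI) (simp add: Rep_mult_op c Rep_l2_lin algebra_simps)
next
  obtain K where K0: "0 < K" and K: "\<forall>n. norm (c n) \<le> K" using c by (elim BseqE)
  show "\<exists>C. \<forall>x. l2_norm (mult_op c x) \<le> C * l2_norm x"
  proof (intro exI allI)
    fix x
    have "l2_inner (mult_op c x) (mult_op c x) = (\<Sum>n. (c n * Rep_l2 x n)\<^sup>2)"
      unfolding l2_inner_self by (simp add: Rep_mult_op c)
    also have "\<dots> \<le> (\<Sum>n. K\<^sup>2 * (Rep_l2 x n)\<^sup>2)"
      by (intro suminf_le mult_op_square_bound[OF K] mult_op_square_summable[OF K]
          summable_mult Rep_l2_square_summable)
    also have "\<dots> = K\<^sup>2 * l2_inner x x"
      unfolding l2_inner_self by (rule suminf_mult[OF Rep_l2_square_summable])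
    finally have "sqrt (l2_inner (mult_op c x) (mult_op c x)) \<le> sqrt (K\<^sup>2 * l2_inner x x)"
      by (rule real_sqrt_le_mono)
    then show "l2_norm (mult_op c x) \<le> K * l2_norm x"
      using K0 by (simp add: l2_norm_def real_sqrt_mult)
  qed
qed

subsection \<open>The algebra \<open>R_inf\<close>\<close>

definition eventually_constant :: "(nat \<Rightarrow> real) \<Rightarrow> bool" where
  "eventually_constant c \<longleftrightarrow> (\<exists>l. \<forall>\<^sub>F n in sequentially. c n = l)"

lemma eventually_constant_imp_Bseq: "eventually_constant c \<Longrightarrow> Bseq c"
  unfolding eventually_constant_def
  by (metis convergentI convergent_imp_Bseq tendsto_eventually)

lemma eventually_constant_comp:
  "eventually_constant c \<Longrightarrow> eventually_constant (\<lambda>n. f (c n))"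
  unfolding eventually_constant_def by (auto elim: eventually_mono)

lemma R_inf_sum_eq_mult_op:
  "(\<lambda>y. Abs_l2 (\<lambda>n. \<Sum>k\<le>N. \<alpha> k * Rep_l2 ((bwd_shift ^^ k) ((fwd_shift ^^ k) y)) n))
     = mult_op (\<lambda>n. \<Sum>k\<le>min N n. \<alpha> k)"
  unfolding mult_op_def
proof (intro ext arg_cong[where f = Abs_l2])
  fix y n
  have "(\<Sum>k\<le>N. \<alpha> k * Rep_l2 ((bwd_shift ^^ k) ((fwd_shift ^^ k) y)) n)
      = (\<Sum>k\<le>N. if k \<in> {..n} then \<alpha> k * Rep_l2 y n else 0)"
    by (intro sum.cong) (simp_all add: Rep_bwd_fwd_shift_pow)
  also have "\<dots> = (\<Sum>k\<in>{..N} \<inter> {..n}. \<alpha> k * Rep_l2 y n)"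
    by (rule sum.inter_restrict[symmetric]) simp
  also have "{..N} \<inter> {..n} = {..min N n}" by auto
  finally show "(\<Sum>k\<le>N. \<alpha> k * Rep_l2 ((bwd_shift ^^ k) ((fwd_shift ^^ k) y)) n)
      = (\<Sum>k\<le>min N n. \<alpha> k) * Rep_l2 y n"
    by (simp add: sum_distrib_right)
qed

lemma R_inf_eq: "R_inf = {mult_op c | c. eventually_constant c}"
proof (intro set_eqI iffI)
  fix T assume "T \<in> R_inf"
  then obtain N \<alpha> where T: "T = mult_op (\<lambda>n. \<Sum>k\<le>min N n. \<alpha> k)"
    unfolding R_inf_def R_inf_sum_eq_mult_op by blast
  have "\<forall>\<^sub>F n in sequentially. (\<Sum>k\<le>min N n. \<alpha> k) = (\<Sum>k\<le>N. \<alpha> k)"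
    unfolding eventually_sequentially by (auto simp: min_def)
  then show "T \<in> {mult_op c | c. eventually_constant c}"
    unfolding T eventually_constant_def by blast
next
  fix T assume "T \<in> {mult_op c | c. eventually_constant c}"
  then obtain c l N where T: "T = mult_op c" and N: "\<And>n. N \<le> n \<Longrightarrow> c n = l"
    unfolding eventually_constant_def eventually_sequentially by blast
  define \<alpha> where "\<alpha> k = c k - (if k = 0 then 0 else c (k - 1))" for k
  have telescope: "(\<Sum>k\<le>m. \<alpha> k) = c m" for m
    by (induction m) (simp_all add: \<alpha>_def)
  have "c = (\<lambda>n. \<Sum>k\<le>min N n. \<alpha> k)"
    by (auto simp: telescope min_def N)
  then show "T \<in> R_inf"
    unfolding R_inf_def R_inf_sum_eq_mult_op T by blast
qed

subsection \<open>Moore--Penrose pseudoinverse\<close>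

lemma self_adjoint_eq_of_left_absorb:
  assumes E: "is_adjoint E E" and F: "is_adjoint F F"
    and EF: "\<And>x. E (F x) = F x" and FE: "\<And>x. F (E x) = E x"
  shows "E = F"
proof (intro ext l2_eq_if_inner_eq)
  fix x z
  have "l2_inner (E x) z = l2_inner (F (E x)) z" by (simp add: FE)
  also have "\<dots> = l2_inner x (E (F z))" using E F unfolding is_adjoint_def by simp
  also have "\<dots> = l2_inner (F x) z" using F unfolding is_adjoint_def by (simp add: EF)
  finally show "l2_inner (E x) z = l2_inner (F x) z" .
qed

lemma self_adjoint_eq_of_right_absorb:
  assumes E: "is_adjoint E E" and F: "is_adjoint F F"
    and EF: "\<And>x. E (F x) = E x" and FE: "\<And>x. F (E x) = F x"
  shows "E = F"
proof (intro ext l2_eq_if_inner_eq)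
  fix x z
  have "l2_inner (E x) z = l2_inner (E (F x)) z" by (simp add: EF)
  also have "\<dots> = l2_inner x (F (E z))" using E F unfolding is_adjoint_def by simp
  also have "\<dots> = l2_inner (F x) z" using F unfolding is_adjoint_def by (simp add: FE)
  finally show "l2_inner (E x) z = l2_inner (F x) z" .
qed

lemma is_mp_pinv_unique:
  assumes X: "is_mp_pinv A X" and Y: "is_mp_pinv A Y"
  shows "X = Y"
proof -
  have AXA: "A (X (A x)) = A x" and AYA: "A (Y (A x)) = A x"
    and XAX: "X (A (X x)) = X x" and YAY: "Y (A (Y x)) = Y x" for x
    using X Y unfolding is_mp_pinv_def by (metis comp_apply)+
  have AX: "A \<circ> X = A \<circ> Y"
    using X Y unfolding is_mp_pinv_def
    by (intro self_adjoint_eq_of_left_absorb) (simp_all add: AXA AYA)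
  have XA: "X \<circ> A = Y \<circ> A"
    using X Y unfolding is_mp_pinv_def
    by (intro self_adjoint_eq_of_right_absorb) (simp_all add: AXA AYA)
  show ?thesis
  proof
    fix x
    have "X x = Y (A (X x))" by (metis XAX XA comp_apply)
    also have "\<dots> = Y x" by (metis YAY AX comp_apply)
    finally show "X x = Y x" .
  qed
qed

lemma is_mp_pinv_mult_op:
  assumes d: "Bseq d" and p: "Bseq (\<lambda>n. inverse (d n))"
  shows "is_mp_pinv (mult_op d) (mult_op (\<lambda>n. inverse (d n)))"
proof -
  have dpd: "d n * inverse (d n) * d n = d n"
    and pdp: "inverse (d n) * d n * inverse (d n) = inverse (d n)" for n
    by (cases "d n = 0"; simp)+
  show ?thesis
    unfolding is_mp_pinv_def
    by (simp add: mult_op_comp bounded_op_mult_op mult_op_self_adjoint Bseq_mult d p dpd pdp)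
qed

lemma is_mp_pinv_mult_op_iff:
  assumes "Bseq d" and "Bseq (\<lambda>n. inverse (d n))"
  shows "is_mp_pinv (mult_op d) P \<longleftrightarrow> P = mult_op (\<lambda>n. inverse (d n))"
  using is_mp_pinv_mult_op[OF assms] is_mp_pinv_unique by blast

subsection \<open>Positive square roots\<close>

lemma mult_op_sqrt_square:
  assumes "Bseq d" and "\<forall>n. 0 \<le> d n"
  shows "mult_op (\<lambda>n. sqrt (d n)) \<circ> mult_op (\<lambda>n. sqrt (d n)) = mult_op d"
  using assms by (simp add: mult_op_comp Bseq_real_sqrt)

lemma psd_mult_op_if_square:
  assumes d: "Bseq d" and S: "is_adjoint S S" and SS: "S \<circ> S = mult_op d"
  shows "psd (mult_op d)"
proof -
  have "0 \<le> l2_inner x (mult_op d x)" for x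
    using inner_square_nonneg_if_self_adjoint[OF S, of x] SS by (metis comp_apply)
  then show ?thesis
    unfolding psd_def by (simp add: bounded_op_mult_op mult_op_self_adjoint d)
qed

lemma psd_mult_op_iff:
  assumes d: "Bseq d"
  shows "psd (mult_op d) \<longleftrightarrow> (\<forall>n. 0 \<le> d n)"
proof
  assume "psd (mult_op d)"
  then have "0 \<le> l2_inner (unit_vec n) (mult_op d (unit_vec n))" for n
    unfolding psd_def by blast
  then show "\<forall>n. 0 \<le> d n"
    by (simp add: l2_inner_unit_vec_left Rep_mult_op d Rep_unit_vec)
next
  assume "\<forall>n. 0 \<le> d n"
  then show "psd (mult_op d)"
    using psd_mult_op_if_square[OF d mult_op_self_adjoint[OF Bseq_real_sqrt[OF d]]]
      mult_op_sqrt_square[OF d] by blast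
qed

lemma psd_sqrt_eigenvector:
  assumes S: "psd S" and a: "0 \<le> a" and SSv: "\<And>k. Rep_l2 (S (S v)) k = a * Rep_l2 v k"
  shows "Rep_l2 (S v) k = sqrt a * Rep_l2 v k"
proof -
  have adj: "\<And>x y. l2_inner x (S y) = l2_inner (S x) y"
    and lin: "\<And>a x b y. S (l2_lin a x b y) = l2_lin a (S x) b (S y)"
    and pos: "\<And>x. 0 \<le> l2_inner x (S x)"
    using S unfolding psd_def is_adjoint_def bounded_op_def by blast+
  show ?thesis
  proof (cases "a = 0")
    case True
    have "l2_inner (S v) (S v) = l2_inner v (S (S v))" by (simp add: adj)
    also have "\<dots> = 0" by (simp add: l2_inner_def SSv True)
    finally show ?thesis using True by (simp add: l2_inner_self_eq_0D)
  next
    case False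
    define r where "r = sqrt a"
    have r: "0 < r" "r * r = a" using a False by (simp_all add: r_def)
    define w where "w = l2_lin 1 (S v) (- r) v"
    have Rep_w: "Rep_l2 w k = Rep_l2 (S v) k - r * Rep_l2 v k" for k
      by (simp add: w_def Rep_l2_lin)
    have "S w = l2_lin 1 (S (S v)) (- r) (S v)" by (simp add: w_def lin)
    then have Rep_Sw: "Rep_l2 (S w) k = - r * Rep_l2 w k" for k
      by (simp add: Rep_l2_lin SSv Rep_w flip: r(2)) (simp add: algebra_simps)
    have "l2_inner w (S w) = (\<Sum>k. - r * (Rep_l2 w k)\<^sup>2)"
      unfolding l2_inner_def by (simp add: Rep_Sw power2_eq_square mult_ac)
    also have "\<dots> = - r * l2_inner w w"
      unfolding l2_inner_self by (rule suminf_mult[OF Rep_l2_square_summable])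
    finally have "l2_inner w (S w) = - r * l2_inner w w" .
    then have "l2_inner w w \<le> 0"
      using pos[of w] r(1) by (simp add: mult_le_0_iff)
    then have "Rep_l2 w k = 0"
      using l2_inner_self_nonneg[of w] by (simp add: l2_inner_self_eq_0D)
    then show ?thesis by (simp add: Rep_w r_def)
  qed
qed

lemma psd_sqrt_mult_op_unique:
  assumes d: "Bseq d" and nonneg: "\<And>n. 0 \<le> d n"
    and S: "psd S" and SS: "S \<circ> S = mult_op d"
  shows "S = mult_op (\<lambda>n. sqrt (d n))"
proof (intro ext l2_eqI)
  fix x m
  have Se: "Rep_l2 (S (unit_vec m)) k = sqrt (d m) * Rep_l2 (unit_vec m) k" for k
  proof (rule psd_sqrt_eigenvector[OF S nonneg])
    fix k
    show "Rep_l2 (S (S (unit_vec m))) k = d m * Rep_l2 (unit_vec m) k"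
      using fun_cong[OF SS, of "unit_vec m"] by (simp add: Rep_mult_op d Rep_unit_vec)
  qed
  have "Rep_l2 (S x) m = l2_inner (S (unit_vec m)) x"
    using S unfolding psd_def is_adjoint_def by (metis l2_inner_unit_vec_left)
  also have "\<dots> = (\<Sum>k. Rep_l2 (unit_vec m) k * (sqrt (d m) * Rep_l2 x k))"
    unfolding l2_inner_def Se by (simp add: mult_ac)
  also have "\<dots> = Rep_l2 (mult_op (\<lambda>n. sqrt (d n)) x) m"
    by (simp add: suminf_unit_vec_mult Rep_mult_op Bseq_real_sqrt[OF d])
  finally show "Rep_l2 (S x) m = Rep_l2 (mult_op (\<lambda>n. sqrt (d n)) x) m" .
qed

lemma psd_square_root_mult_op_iff:
  assumes d: "Bseq d" and nonneg: "\<forall>n. 0 \<le> d n"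
  shows "psd S \<and> S \<circ> S = mult_op d \<longleftrightarrow> S = mult_op (\<lambda>n. sqrt (d n))"
proof
  assume "psd S \<and> S \<circ> S = mult_op d"
  then show "S = mult_op (\<lambda>n. sqrt (d n))"
    using psd_sqrt_mult_op_unique[OF d nonneg[rule_format]] by blast
next
  assume S: "S = mult_op (\<lambda>n. sqrt (d n))"
  have "psd (mult_op (\<lambda>n. sqrt (d n)))"
    using nonneg by (simp add: psd_mult_op_iff[OF Bseq_real_sqrt[OF d]])
  then show "psd S \<and> S \<circ> S = mult_op d"
    using mult_op_sqrt_square[OF d nonneg] by (simp add: S)
qed

theorem lemma2:
  assumes "y \<in> R_inf"
  shows "(\<exists>!P. is_mp_pinv y P) \<and> (\<forall>P. is_mp_pinv y P \<longrightarrow> P \<in> R_inf)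
    \<and> ((\<exists>!S. psd S \<and> S \<circ> S = y) \<longleftrightarrow> psd y)
    \<and> (psd y \<longrightarrow> (\<forall>S. psd S \<and> S \<circ> S = y \<longrightarrow> S \<in> R_inf))"
proof -
  obtain d where d: "eventually_constant d" and y: "y = mult_op d"
    using assms unfolding R_inf_eq by blast
  have B: "Bseq d" "Bseq (\<lambda>n. inverse (d n))"
    using d by (simp_all add: eventually_constant_imp_Bseq eventually_constant_comp)
  have in_R_inf: "mult_op (\<lambda>n. inverse (d n)) \<in> R_inf" "mult_op (\<lambda>n. sqrt (d n)) \<in> R_inf"
    unfolding R_inf_eq using d by (auto intro: eventually_constant_comp)
  have pinv: "is_mp_pinv y P \<longleftrightarrow> P = mult_op (\<lambda>n. inverse (d n))" for P
    unfolding y using B by (rule is_mp_pinv_mult_op_iff)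
  have root: "psd S \<and> S \<circ> S = y \<longleftrightarrow> S = mult_op (\<lambda>n. sqrt (d n))" if "psd y" for S
    using that B(1) by (simp add: y psd_mult_op_iff psd_square_root_mult_op_iff)
  have psd_if_root: "psd y" if "psd S" "S \<circ> S = y" for S
  proof -
    have "is_adjoint S S" using \<open>psd S\<close> unfolding psd_def by blast
    with \<open>S \<circ> S = y\<close> show ?thesis
      unfolding y by (intro psd_mult_op_if_square[OF B(1)])
  qed
  show ?thesis
  proof (intro conjI)
    show "\<exists>!P. is_mp_pinv y P" and "\<forall>P. is_mp_pinv y P \<longrightarrow> P \<in> R_inf"
      using in_R_inf(1) by (simp_all add: pinv)
    show "(\<exists>!S. psd S \<and> S \<circ> S = y) \<longleftrightarrow> psd y"
    proof
      assume "\<exists>!S. psd S \<and> S \<circ> S = y"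
      then show "psd y" using psd_if_root by blast
    next
      assume "psd y"
      then show "\<exists>!S. psd S \<and> S \<circ> S = y" by (simp add: root)
    qed
    show "psd y \<longrightarrow> (\<forall>S. psd S \<and> S \<circ> S = y \<longrightarrow> S \<in> R_inf)"
      using in_R_inf(2) by (simp add: root)
  qed
qed

end
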